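(* Let $K_1,K_2\subset\mathbb{R}^n$ be closed with $T_{K_1}(x)=T^a_{K_1}(x)$ for all $x\in\partial K_1\cap\partial K_2$. Let $x_o\in\partial K_1\cap\partial K_2$ and assume there exist a neighborhood $\mathcal{N}(x_o)$ of $x_o$, $c>0$ and $\alpha\in[0,1)$ such that for all $(x_1,x_2)\in((\partial K_1\setminus K_2)\cap\mathcal{N}(x_o))\times((\partial K_2\setminus K_1)\cap\mathcal{N}(x_o))$ there exist $(v_1,v_2)\in T_{K_1}(x_1)\times T_{K_2}(x_2)$ with $|(v_1,v_2)|\le c|x_1-x_2|$ and $$x_2-x_1\in(v_1-v_2)+\alpha|x_1-x_2|\mathbb{B}.$$ Then $$T_{K_1}(x_o)\cap T_{K_2}(x_o)=T_{K_1\cap K_2}(x_o)\quad\text{and}\quad T^a_{K_1}(x_o)\cap T^a_{K_2}(x_o)=T^a_{K_1\cap K_2}(x_o).$$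
   Context: $\mathbb{B}$ is the closed unit ball of $\mathbb{R}^n$. Contingent cone of a set $S$ at $x\in\operatorname{cl}(S)$: $T_S(x)=\{v: \exists t_i\to 0^+, \exists v_i\to v,\ x+t_iv_i\in S\}$. Adjacent cone: $T^a_S(x)=\{v: \forall t_i\to 0^+, \exists v_i\to v,\ x+t_iv_i\in S\}$. *)

theory Defs
  imports "HOL-Analysis.Analysis"
begin

definition contingent_cone :: "'a::real_normed_vector set \<Rightarrow> 'a \<Rightarrow> 'a set" where
  "contingent_cone S x = {v. \<exists>t w. (\<forall>i. t i > 0) \<and> t \<longlonglongrightarrow> 0 \<and> w \<longlonglongrightarrow> v \<and>
       (\<forall>i. x + t i *\<^sub>R w i \<in> S)}"

definition adjacent_cone :: "'a::real_normed_vector set \<Rightarrow> 'a \<Rightarrow> 'a set" where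
  "adjacent_cone S x = {v. \<forall>t. (\<forall>i. t i > 0) \<and> t \<longlonglongrightarrow> 0 \<longrightarrow>
       (\<exists>w. w \<longlonglongrightarrow> v \<and> (\<forall>i. x + t i *\<^sub>R w i \<in> S))}"

end

theory Submission
  imports Defs
begin

text \<open>Near xo the two sets are linearly regular: points y1 \<in> K1 and y2 \<in> K2 can be moved
  to a common point of K1 \<inter> K2 at cost proportional to norm (y1 - y2). To see this, minimise
  norm (w1 - w2) + l * (norm (w1 - y1) + norm (w2 - y2)) over K1 \<times> K2 for a small l. If the
  minimiser (z1, z2) had z1 \<noteq> z2, then z1 \<in> frontier K1 - K2 and z2 \<in> frontier K2 - K1, and the
  first-order conditions along tangent directions would read
  0 \<le> (v1 - v2) \<bullet> sgn (z1 - z2) + l * (norm v1 + norm v2); the transversality hypothesis supplies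
  tangent vectors that violate this. Linear regularity then lets sequences approaching xo in K1
  and in K2 along the same times be merged into one in K1 \<inter> K2.\<close>

lemma contingent_cone_mono: "S \<subseteq> T \<Longrightarrow> contingent_cone S x \<subseteq> contingent_cone T x"
  unfolding contingent_cone_def by blast

lemma adjacent_cone_mono: "S \<subseteq> T \<Longrightarrow> adjacent_cone S x \<subseteq> adjacent_cone T x"
  unfolding adjacent_cone_def by blast

lemma contingent_cone_interior:
  assumes "x \<in> interior S"
  shows "contingent_cone S x = UNIV"
proof -
  obtain r where "r > 0" and ball: "ball x r \<subseteq> S"
    using assms mem_interior by blast
  have "v \<in> contingent_cone S x" for v
  proof -
    define s where "s = r / (norm v + 1)"
    define t where "t k = s / real (Suc k)" for k :: nat
    have "s > 0" "s * norm v < r"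
      using \<open>r > 0\<close> by (simp_all add: s_def field_simps add_pos_nonneg)
    have t_pos: "t k > 0" and "t k \<le> s" for k
      using \<open>s > 0\<close> by (simp_all add: t_def field_simps)
    then have "t k * norm v < r" for k
      using \<open>s * norm v < r\<close> by (meson le_less_trans mult_right_mono norm_ge_zero)
    then have "x + t k *\<^sub>R v \<in> S" for k
      using ball t_pos[of k] by (auto simp: dist_norm)
    moreover have "t \<longlonglongrightarrow> 0"
      unfolding t_def by (rule LIMSEQ_Suc[OF lim_const_over_n])
    ultimately show ?thesis
      unfolding contingent_cone_def using t_pos by blast
  qed
  then show ?thesis by blast
qed

lemma has_derivative_difference_quotient_sequence:
  fixes f :: "'a::real_normed_vector \<Rightarrow> 'b::real_normed_vector"
  assumes deriv: "(f has_derivative f') (at z)"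
    and t_pos: "\<forall>k. t k > 0" and "t \<longlonglongrightarrow> 0" and u_lim: "u \<longlonglongrightarrow> v"
  shows "(\<lambda>k. (f (z + t k *\<^sub>R u k) - f z) /\<^sub>R t k) \<longlonglongrightarrow> f' v"
proof -
  define r where "r h = norm (f (z + h) - f z - f' h) / norm h" for h
  have lin: "bounded_linear f'" and "(r \<longlongrightarrow> 0) (at 0)"
    using deriv unfolding has_derivative_at r_def by auto
  \<comment> \<open>the junk value r 0 = 0 makes the remainder continuous at 0\<close>
  then have "isCont r 0"
    by (simp add: isCont_def r_def)
  moreover have "(\<lambda>k. t k *\<^sub>R u k) \<longlonglongrightarrow> 0"
    using tendsto_scaleR[OF \<open>t \<longlonglongrightarrow> 0\<close> u_lim] by simp
  ultimately have "(\<lambda>k. r (t k *\<^sub>R u k)) \<longlonglongrightarrow> 0"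
    using isCont_tendsto_compose by (fastforce simp: r_def)
  then have "(\<lambda>k. norm (u k) * r (t k *\<^sub>R u k)) \<longlonglongrightarrow> norm v * 0"
    by (intro tendsto_mult tendsto_norm u_lim)
  moreover have "norm ((f (z + t k *\<^sub>R u k) - f z) /\<^sub>R t k - f' (u k))
      = norm (u k) * r (t k *\<^sub>R u k)" for k
  proof -
    define D where "D = f (z + t k *\<^sub>R u k) - f z - f' (t k *\<^sub>R u k)"
    have tk: "t k > 0"
      using t_pos by blast
    then have quotient: "(f (z + t k *\<^sub>R u k) - f z) /\<^sub>R t k - f' (u k) = D /\<^sub>R t k"
      by (simp add: D_def linear_simps[OF lin] scaleR_diff_right)
    have "norm (D /\<^sub>R t k) = norm (u k) * r (t k *\<^sub>R u k)"
    proof (cases "u k = 0")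
      case True
      then show ?thesis
        by (simp add: D_def linear_simps[OF lin])
    next
      case False
      then show ?thesis
        using tk by (simp add: D_def r_def divide_inverse mult.commute)
    qed
    then show ?thesis
      by (simp add: quotient)
  qed
  ultimately have "(\<lambda>k. norm ((f (z + t k *\<^sub>R u k) - f z) /\<^sub>R t k - f' (u k))) \<longlonglongrightarrow> 0"
    by simp
  then have "(\<lambda>k. (f (z + t k *\<^sub>R u k) - f z) /\<^sub>R t k - f' (u k)) \<longlonglongrightarrow> 0"
    by (rule tendsto_norm_zero_cancel)
  moreover have "(\<lambda>k. f' (u k)) \<longlonglongrightarrow> f' v"
    using bounded_linear.tendsto[OF lin u_lim] .
  ultimately show ?thesis
    using tendsto_add by fastforce
qed

lemma contingent_cone_first_order_condition:
  fixes f :: "'a::real_normed_vector \<Rightarrow> real"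
  assumes deriv: "(f has_derivative f') (at z)"
    and min: "\<And>w. w \<in> K \<Longrightarrow> f z \<le> f w + l * norm (w - z)"
    and "v \<in> contingent_cone K z"
  shows "0 \<le> f' v + l * norm v"
proof -
  obtain t u where t_pos: "\<forall>k. t k > 0" and "t \<longlonglongrightarrow> 0" and u_lim: "u \<longlonglongrightarrow> v"
    and in_K: "\<forall>k. z + t k *\<^sub>R u k \<in> K"
    using assms(3) unfolding contingent_cone_def by blast
  have "0 \<le> (f (z + t k *\<^sub>R u k) - f z) / t k + l * norm (u k)" for k
  proof -
    have "f z \<le> f (z + t k *\<^sub>R u k) + l * (t k * norm (u k))"
      using min[OF in_K[rule_format]] t_pos by (simp add: less_imp_le)
    then show ?thesis
      using t_pos[rule_format, of k] by (simp add: field_simps)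
  qed
  moreover have "(\<lambda>k. (f (z + t k *\<^sub>R u k) - f z) / t k + l * norm (u k)) \<longlonglongrightarrow> f' v + l * norm v"
    using has_derivative_difference_quotient_sequence[OF deriv t_pos \<open>t \<longlonglongrightarrow> 0\<close> u_lim]
    by (intro tendsto_intros u_lim) (simp add: divide_inverse mult.commute)
  ultimately show ?thesis
    by (intro LIMSEQ_le_const) auto
qed

lemma has_derivative_norm_diff:
  fixes a b :: "'a::real_inner"
  assumes "a \<noteq> b"
  shows "((\<lambda>w. norm (w - b)) has_derivative (\<lambda>h. inner h (sgn (a - b)))) (at a)"
  using has_derivative_compose[OF has_derivative_diff[OF has_derivative_ident has_derivative_const]
      has_derivative_norm[of "a - b"]] assms
  by simp

lemma inner_sgn_self: "inner x (sgn x) = norm x"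
  for x :: "'a::real_inner"
  by (cases "x = 0") (simp_all add: sgn_div_norm dot_square_norm power2_eq_square)

lemma inner_sgn_le_of_perturbed_opposite:
  fixes a b w :: "'a::real_inner"
  assumes "- a = w + (\<alpha> * norm a) *\<^sub>R b" and "norm b \<le> 1" and "0 \<le> \<alpha>"
  shows "inner w (sgn a) \<le> - (1 - \<alpha>) * norm a"
proof -
  have "- inner b (sgn a) \<le> 1"
    using Cauchy_Schwarz_ineq2[of b "sgn a"] assms(2) norm_sgn[of a]
    by (cases "a = 0") auto
  then have "(\<alpha> * norm a) * - inner b (sgn a) \<le> (\<alpha> * norm a) * 1"
    using assms(3) by (intro mult_left_mono) auto
  moreover have "inner w (sgn a) = - norm a - (\<alpha> * norm a) * inner b (sgn a)"
  proof -
    have w_eq: "w = - a - (\<alpha> * norm a) *\<^sub>R b"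
      using assms(1) by (simp add: algebra_simps)
    show ?thesis
      unfolding w_eq by (simp add: inner_diff_left inner_sgn_self)
  qed
  ultimately show ?thesis
    by (simp add: algebra_simps)
qed

definition penalized_distance :: "real \<Rightarrow> 'a::real_normed_vector \<Rightarrow> 'a \<Rightarrow> 'a \<Rightarrow> 'a \<Rightarrow> real" where
  "penalized_distance l y1 y2 w1 w2 = norm (w1 - w2) + l * (norm (w1 - y1) + norm (w2 - y2))"

lemma penalized_distance_commute:
  "penalized_distance l y1 y2 w1 w2 = penalized_distance l y2 y1 w2 w1"
  by (simp add: penalized_distance_def norm_minus_commute add.commute)

lemma penalized_distance_minimizer_exists:
  fixes K1 K2 :: "'a::{real_normed_vector,heine_borel} set"
  assumes "closed K1" and "closed K2" and "y1 \<in> K1" and "y2 \<in> K2" and "l > 0"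
  obtains z1 z2 where "z1 \<in> K1" and "z2 \<in> K2"
    and "\<And>w1 w2. w1 \<in> K1 \<Longrightarrow> w2 \<in> K2 \<Longrightarrow>
      penalized_distance l y1 y2 z1 z2 \<le> penalized_distance l y1 y2 w1 w2"
proof -
  define F where "F p = penalized_distance l y1 y2 (fst p) (snd p)" for p
  define R where "R = norm (y1 - y2) / l"
  define S where "S = (cball y1 R \<inter> K1) \<times> (cball y2 R \<inter> K2)"
  have "compact S"
    unfolding S_def using assms by (intro compact_Times compact_Int_closed) auto
  moreover have y_in_S: "(y1, y2) \<in> S"
    using assms by (simp add: S_def R_def)
  moreover have "continuous_on S F"
    unfolding F_def penalized_distance_def by (intro continuous_intros)
  ultimately obtain z where "z \<in> S" and z_min: "\<And>p. p \<in> S \<Longrightarrow> F z \<le> F p"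
    using continuous_attains_inf[of S F] by blast
  have "F z \<le> F p" if "p \<in> K1 \<times> K2" for p
  proof (cases "p \<in> S")
    case False
    \<comment> \<open>outside the box the penalty alone exceeds the value at (y1, y2)\<close>
    then have "R < norm (fst p - y1) \<or> R < norm (snd p - y2)"
      using that by (auto simp: S_def dist_norm norm_minus_commute)
    then have "R < norm (fst p - y1) + norm (snd p - y2)"
      using norm_ge_zero[of "fst p - y1"] norm_ge_zero[of "snd p - y2"] by linarith
    then have "norm (y1 - y2) < l * (norm (fst p - y1) + norm (snd p - y2))"
      using \<open>l > 0\<close> by (simp add: R_def field_simps)
    then have "F (y1, y2) < F p"
      by (simp add: F_def penalized_distance_def add_strict_increasing2)
    then show ?thesis
      using z_min[OF y_in_S] by simp
  qed (rule z_min)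
  then show thesis
    using that[of "fst z" "snd z"] \<open>z \<in> S\<close> by (auto simp: S_def F_def)
qed

lemma penalized_minimizer_close:
  assumes min: "\<And>w1 w2. w1 \<in> K1 \<Longrightarrow> w2 \<in> K2 \<Longrightarrow>
      penalized_distance l y1 y2 z1 z2 \<le> penalized_distance l y1 y2 w1 w2"
    and "y1 \<in> K1" and "y2 \<in> K2" and "0 \<le> l"
  shows "l * norm (z1 - y1) \<le> norm (y1 - y2)" and "l * norm (z2 - y2) \<le> norm (y1 - y2)"
proof -
  have "norm (z1 - z2) + l * norm (z1 - y1) + l * norm (z2 - y2) \<le> norm (y1 - y2)"
    using min[OF \<open>y1 \<in> K1\<close> \<open>y2 \<in> K2\<close>] by (simp add: penalized_distance_def distrib_left)
  moreover have "0 \<le> l * norm (z1 - y1)" and "0 \<le> l * norm (z2 - y2)"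
    using \<open>0 \<le> l\<close> by simp_all
  ultimately show "l * norm (z1 - y1) \<le> norm (y1 - y2)" and "l * norm (z2 - y2) \<le> norm (y1 - y2)"
    using norm_ge_zero[of "z1 - z2"] by linarith+
qed

lemma penalized_minimizer_first_order:
  fixes z1 z2 :: "'a::real_inner"
  assumes min: "\<And>w1. w1 \<in> K1 \<Longrightarrow>
      penalized_distance l y1 y2 z1 z2 \<le> penalized_distance l y1 y2 w1 z2"
    and "0 \<le> l" and "z1 \<noteq> z2" and "v \<in> contingent_cone K1 z1"
  shows "0 \<le> inner v (sgn (z1 - z2)) + l * norm v"
proof (rule contingent_cone_first_order_condition)
  show "((\<lambda>w. norm (w - z2)) has_derivative (\<lambda>h. inner h (sgn (z1 - z2)))) (at z1)"
    using \<open>z1 \<noteq> z2\<close> by (rule has_derivative_norm_diff)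
  show "norm (z1 - z2) \<le> norm (w - z2) + l * norm (w - z1)" if "w \<in> K1" for w
  proof -
    have "norm (w - y1) \<le> norm (w - z1) + norm (z1 - y1)"
      by (rule norm_diff_triangle_le[OF order_refl order_refl])
    then have "l * norm (w - y1) \<le> l * (norm (w - z1) + norm (z1 - y1))"
      using \<open>0 \<le> l\<close> by (rule mult_left_mono)
    then show ?thesis
      using min[OF that] by (simp add: penalized_distance_def algebra_simps)
  qed
qed fact

lemma penalized_minimizer_in_frontier_diff:
  fixes z1 z2 :: "'a::real_inner"
  assumes min: "\<And>w1 w2. w1 \<in> K1 \<Longrightarrow> w2 \<in> K2 \<Longrightarrow>
      penalized_distance l y1 y2 z1 z2 \<le> penalized_distance l y1 y2 w1 w2"
    and "closed K1" and "z1 \<in> K1" and "z2 \<in> K2" and "z1 \<noteq> z2" and "0 \<le> l" and "l < 1"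
  shows "z1 \<in> frontier K1 - K2"
proof
  have "z1 \<notin> interior K1"
  proof
    assume "z1 \<in> interior K1"
    then have "z2 - z1 \<in> contingent_cone K1 z1"
      by (simp add: contingent_cone_interior)
    then have "0 \<le> inner (z2 - z1) (sgn (z1 - z2)) + l * norm (z2 - z1)"
      using assms by (intro penalized_minimizer_first_order) auto
    moreover have "inner (z2 - z1) (sgn (z1 - z2)) = - norm (z1 - z2)"
      by (metis inner_minus_left inner_sgn_self minus_diff_eq)
    ultimately show False
      using \<open>l < 1\<close> \<open>z1 \<noteq> z2\<close> by (simp add: norm_minus_commute mult_less_cancel_right2)
  qed
  then show "z1 \<in> frontier K1"
    using \<open>closed K1\<close> \<open>z1 \<in> K1\<close> by (simp add: frontier_def)
  show "z1 \<notin> K2"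
  proof
    assume "z1 \<in> K2"
    have "norm (z1 - y2) \<le> norm (z1 - z2) + norm (z2 - y2)"
      by (rule norm_diff_triangle_le[OF order_refl order_refl])
    then have "l * norm (z1 - y2) \<le> l * (norm (z1 - z2) + norm (z2 - y2))"
      using \<open>0 \<le> l\<close> by (rule mult_left_mono)
    moreover have "l * norm (z1 - z2) < norm (z1 - z2)"
      using \<open>l < 1\<close> \<open>z1 \<noteq> z2\<close> by simp
    moreover have "penalized_distance l y1 y2 z1 z2 \<le> penalized_distance l y1 y2 z1 z1"
      using min \<open>z1 \<in> K1\<close> \<open>z1 \<in> K2\<close> by blast
    ultimately show False
      by (simp add: penalized_distance_def algebra_simps)
  qed
qed

lemma transversal_penalized_minimizer_eq:
  fixes K1 K2 :: "'a::real_inner set"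
  assumes "closed K1" and "closed K2" and "z1 \<in> K1" and "z2 \<in> K2" and "z1 \<in> N" and "z2 \<in> N"
    and min: "\<And>w1 w2. w1 \<in> K1 \<Longrightarrow> w2 \<in> K2 \<Longrightarrow>
      penalized_distance l y1 y2 z1 z2 \<le> penalized_distance l y1 y2 w1 w2"
    and "0 \<le> l" and "l < 1" and "0 \<le> \<alpha>" and "2 * c * l < 1 - \<alpha>"
    and transversal: "\<forall>x1 \<in> (frontier K1 - K2) \<inter> N. \<forall>x2 \<in> (frontier K2 - K1) \<inter> N.
           \<exists>v1 \<in> contingent_cone K1 x1. \<exists>v2 \<in> contingent_cone K2 x2.
             norm (v1, v2) \<le> c * norm (x1 - x2) \<and>
             x2 - x1 \<in> (\<lambda>b. (v1 - v2) + b) ` ((\<lambda>b. (\<alpha> * norm (x1 - x2)) *\<^sub>R b) ` cball 0 1)"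
  shows "z1 = z2"
proof (rule ccontr)
  assume "z1 \<noteq> z2"
  have min_swapped: "penalized_distance l y2 y1 z2 z1 \<le> penalized_distance l y2 y1 w2 w1"
    if "w2 \<in> K2" and "w1 \<in> K1" for w1 w2
    using min[OF that(2,1)] by (simp add: penalized_distance_commute)
  have "z1 \<in> frontier K1 - K2" and "z2 \<in> frontier K2 - K1"
    using penalized_minimizer_in_frontier_diff[OF min] penalized_minimizer_in_frontier_diff[OF min_swapped]
      assms \<open>z1 \<noteq> z2\<close> by auto
  then obtain v1 v2 b where v1: "v1 \<in> contingent_cone K1 z1" and v2: "v2 \<in> contingent_cone K2 z2"
    and v_bound: "norm (v1, v2) \<le> c * norm (z1 - z2)" and "norm b \<le> 1"
    and perturbed: "z2 - z1 = (v1 - v2) + (\<alpha> * norm (z1 - z2)) *\<^sub>R b"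
    using transversal \<open>z1 \<in> N\<close> \<open>z2 \<in> N\<close> by fastforce
  have "0 \<le> inner v1 (sgn (z1 - z2)) + l * norm v1"
    using min \<open>z2 \<in> K2\<close> \<open>0 \<le> l\<close> \<open>z1 \<noteq> z2\<close> v1 by (intro penalized_minimizer_first_order) auto
  moreover have "0 \<le> inner v2 (sgn (z2 - z1)) + l * norm v2"
    using min_swapped \<open>z1 \<in> K1\<close> \<open>0 \<le> l\<close> \<open>z1 \<noteq> z2\<close> v2 by (intro penalized_minimizer_first_order) auto
  moreover have "sgn (z2 - z1) = - sgn (z1 - z2)"
    by (metis minus_diff_eq sgn_minus)
  ultimately have first_order: "0 \<le> inner (v1 - v2) (sgn (z1 - z2)) + l * (norm v1 + norm v2)"
    by (simp add: algebra_simps)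
  have "inner (v1 - v2) (sgn (z1 - z2)) \<le> - (1 - \<alpha>) * norm (z1 - z2)"
    using perturbed \<open>norm b \<le> 1\<close> \<open>0 \<le> \<alpha>\<close> by (intro inner_sgn_le_of_perturbed_opposite) auto
  moreover have "l * (norm v1 + norm v2) \<le> (2 * c * l) * norm (z1 - z2)"
  proof -
    have "norm v1 + norm v2 \<le> 2 * (c * norm (z1 - z2))"
      using norm_fst_le[of v1 v2] norm_snd_le[of v2 v1] v_bound by simp
    then have "l * (norm v1 + norm v2) \<le> l * (2 * (c * norm (z1 - z2)))"
      using \<open>0 \<le> l\<close> by (rule mult_left_mono)
    then show ?thesis
      by (simp add: algebra_simps)
  qed
  moreover have "(2 * c * l) * norm (z1 - z2) < (1 - \<alpha>) * norm (z1 - z2)"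
    using \<open>2 * c * l < 1 - \<alpha>\<close> \<open>z1 \<noteq> z2\<close> by simp
  ultimately show False
    using first_order by linarith
qed

definition linearly_regular_at :: "'a::real_normed_vector set \<Rightarrow> 'a set \<Rightarrow> 'a \<Rightarrow> bool" where
  "linearly_regular_at K1 K2 x \<longleftrightarrow> (\<exists>\<rho>>0. \<exists>\<kappa>>0. \<forall>y1\<in>K1. \<forall>y2\<in>K2.
     dist y1 x < \<rho> \<longrightarrow> dist y2 x < \<rho> \<longrightarrow> (\<exists>z\<in>K1 \<inter> K2. norm (z - y1) \<le> \<kappa> * norm (y1 - y2)))"

lemma transversal_imp_linearly_regular_at:
  fixes K1 K2 :: "'a::euclidean_space set"
  assumes "closed K1" and "closed K2" and "open N" and "xo \<in> N"
    and "c > 0" and "0 \<le> \<alpha>" and "\<alpha> < 1"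
    and transversal: "\<forall>x1 \<in> (frontier K1 - K2) \<inter> N. \<forall>x2 \<in> (frontier K2 - K1) \<inter> N.
           \<exists>v1 \<in> contingent_cone K1 x1. \<exists>v2 \<in> contingent_cone K2 x2.
             norm (v1, v2) \<le> c * norm (x1 - x2) \<and>
             x2 - x1 \<in> (\<lambda>b. (v1 - v2) + b) ` ((\<lambda>b. (\<alpha> * norm (x1 - x2)) *\<^sub>R b) ` cball 0 1)"
  shows "linearly_regular_at K1 K2 xo"
proof -
  obtain e where "e > 0" and ball_N: "ball xo e \<subseteq> N"
    using \<open>open N\<close> \<open>xo \<in> N\<close> open_contains_ball by blast
  define l where "l = min (1/2) ((1 - \<alpha>) / (4 * c))"
  have "0 < l" and "l \<le> 1/2" and "2 * c * l < 1 - \<alpha>"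
    using \<open>c > 0\<close> \<open>\<alpha> < 1\<close> by (auto simp: l_def min_def field_simps)
  define \<rho> where "\<rho> = e * l / 4"
  have "\<rho> > 0"
    using \<open>e > 0\<close> \<open>l > 0\<close> by (simp add: \<rho>_def)
  have "\<exists>z\<in>K1 \<inter> K2. norm (z - y1) \<le> (1 / l) * norm (y1 - y2)"
    if y1: "y1 \<in> K1" and y2: "y2 \<in> K2" and near1: "dist y1 xo < \<rho>" and near2: "dist y2 xo < \<rho>"
    for y1 y2
  proof -
    obtain z1 z2 where "z1 \<in> K1" and "z2 \<in> K2" and min: "\<And>w1 w2. w1 \<in> K1 \<Longrightarrow> w2 \<in> K2 \<Longrightarrow>
        penalized_distance l y1 y2 z1 z2 \<le> penalized_distance l y1 y2 w1 w2"
      using penalized_distance_minimizer_exists[OF \<open>closed K1\<close> \<open>closed K2\<close> y1 y2 \<open>l > 0\<close>]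
      by blast
    have close1: "l * norm (z1 - y1) \<le> norm (y1 - y2)" and close2: "l * norm (z2 - y2) \<le> norm (y1 - y2)"
      using penalized_minimizer_close[OF min y1 y2] \<open>l > 0\<close> by simp_all
    have y_close: "norm (y1 - y2) < 2 * \<rho>"
      using dist_triangle2[of y1 y2 xo] near1 near2 by (simp add: dist_norm)
    have in_N: "z \<in> N" if "l * norm (z - y) \<le> norm (y1 - y2)" and "dist y xo < \<rho>" for z y
    proof -
      have "l * (2 * norm (z - y)) < l * e"
        using that(1) y_close by (simp add: \<rho>_def algebra_simps)
      then have "norm (z - y) < e / 2"
        using mult_less_cancel_left_pos[OF \<open>l > 0\<close>] by simp
      moreover have "\<rho> \<le> e / 8"
        using \<open>l \<le> 1/2\<close> \<open>e > 0\<close> by (simp add: \<rho>_def)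
      ultimately have "dist z xo < e"
        using dist_triangle[of z xo y] that(2) \<open>e > 0\<close> by (simp add: dist_norm)
      then show ?thesis
        using ball_N by (auto simp: dist_commute)
    qed
    have "z1 = z2"
      using \<open>l > 0\<close> \<open>l \<le> 1/2\<close> in_N[OF close1 near1] in_N[OF close2 near2]
      by (intro transversal_penalized_minimizer_eq[OF \<open>closed K1\<close> \<open>closed K2\<close> \<open>z1 \<in> K1\<close> \<open>z2 \<in> K2\<close>
            _ _ min _ _ \<open>0 \<le> \<alpha>\<close> \<open>2 * c * l < 1 - \<alpha>\<close> transversal]) auto
    then show ?thesis
      using \<open>z1 \<in> K1\<close> \<open>z2 \<in> K2\<close> close1 \<open>l > 0\<close> by (auto simp: field_simps)
  qed
  moreover have "1 / l > 0"
    using \<open>l > 0\<close> by simp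
  ultimately show ?thesis
    unfolding linearly_regular_at_def using \<open>\<rho> > 0\<close> by blast
qed

lemma tendsto_of_eventually_norm_diff_le:
  assumes w1_lim: "(w1 \<longlongrightarrow> v) F" and w2_lim: "(w2 \<longlongrightarrow> v) F"
    and "eventually (\<lambda>i. norm (w i - w1 i) \<le> \<kappa> * norm (w1 i - w2 i)) F"
  shows "(w \<longlongrightarrow> v) F"
proof -
  have "((\<lambda>i. \<kappa> * norm (w1 i - w2 i)) \<longlongrightarrow> \<kappa> * norm (v - v)) F"
    by (intro tendsto_intros w1_lim w2_lim)
  then have "((\<lambda>i. \<kappa> * norm (w1 i - w2 i)) \<longlongrightarrow> 0) F"
    by simp
  with assms(3) have "((\<lambda>i. w i - w1 i) \<longlongrightarrow> 0) F"
    by (rule Lim_null_comparison)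
  then have "((\<lambda>i. (w i - w1 i) + w1 i) \<longlongrightarrow> 0 + v) F"
    using w1_lim by (rule tendsto_add)
  then show ?thesis
    by simp
qed

lemma linearly_regular_at_common_sequence:
  assumes "linearly_regular_at K1 K2 x" and "x \<in> K1 \<inter> K2"
    and t_pos: "\<forall>i. t i > 0" and "t \<longlonglongrightarrow> 0" and w1_lim: "w1 \<longlonglongrightarrow> v" and w2_lim: "w2 \<longlonglongrightarrow> v"
    and in_K1: "\<forall>i. x + t i *\<^sub>R w1 i \<in> K1" and in_K2: "\<forall>i. x + t i *\<^sub>R w2 i \<in> K2"
  shows "\<exists>w. w \<longlonglongrightarrow> v \<and> (\<forall>i. x + t i *\<^sub>R w i \<in> K1 \<inter> K2)"
proof -
  obtain \<rho> \<kappa> where "\<rho> > 0" and regular: "\<And>y1 y2. y1 \<in> K1 \<Longrightarrow> y2 \<in> K2 \<Longrightarrow>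
      dist y1 x < \<rho> \<Longrightarrow> dist y2 x < \<rho> \<Longrightarrow> \<exists>z\<in>K1 \<inter> K2. norm (z - y1) \<le> \<kappa> * norm (y1 - y2)"
    using assms(1) unfolding linearly_regular_at_def by blast
  define y1 where "y1 i = x + t i *\<^sub>R w1 i" for i
  define y2 where "y2 i = x + t i *\<^sub>R w2 i" for i
  define near where "near i \<longleftrightarrow> dist (y1 i) x < \<rho> \<and> dist (y2 i) x < \<rho>" for i
  \<comment> \<open>far from x any point of the intersection will do: only the tail of the sequence matters\<close>
  have "\<forall>i. \<exists>z. z \<in> K1 \<inter> K2 \<and> (near i \<longrightarrow> norm (z - y1 i) \<le> \<kappa> * norm (y1 i - y2 i))"
  proof
    fix i
    show "\<exists>z. z \<in> K1 \<inter> K2 \<and> (near i \<longrightarrow> norm (z - y1 i) \<le> \<kappa> * norm (y1 i - y2 i))"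
      using regular[of "y1 i" "y2 i"] in_K1 in_K2 \<open>x \<in> K1 \<inter> K2\<close>
      unfolding near_def y1_def y2_def by (cases "near i") (auto simp: near_def)
  qed
  then obtain z where z_in: "\<And>i. z i \<in> K1 \<inter> K2"
    and z_close: "\<And>i. near i \<Longrightarrow> norm (z i - y1 i) \<le> \<kappa> * norm (y1 i - y2 i)"
    by metis
  define w where "w i = (1 / t i) *\<^sub>R (z i - x)" for i
  have z_eq: "x + t i *\<^sub>R w i = z i" for i
    using t_pos[rule_format, of i] by (simp add: w_def)
  have "y1 \<longlonglongrightarrow> x + 0 *\<^sub>R v"
    unfolding y1_def by (intro tendsto_intros \<open>t \<longlonglongrightarrow> 0\<close> w1_lim)
  moreover have "y2 \<longlonglongrightarrow> x + 0 *\<^sub>R v"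
    unfolding y2_def by (intro tendsto_intros \<open>t \<longlonglongrightarrow> 0\<close> w2_lim)
  ultimately have "eventually near sequentially"
    using tendstoD[of y1 x, OF _ \<open>\<rho> > 0\<close>] tendstoD[of y2 x, OF _ \<open>\<rho> > 0\<close>]
    unfolding near_def by (auto intro: eventually_conj)
  then have "eventually (\<lambda>i. norm (w i - w1 i) \<le> \<kappa> * norm (w1 i - w2 i)) sequentially"
  proof (rule eventually_mono)
    fix i
    assume "near i"
    have "t i > 0"
      using t_pos by blast
    have "w i - w1 i = (1 / t i) *\<^sub>R (z i - y1 i)"
      using \<open>t i > 0\<close> by (simp add: w_def y1_def algebra_simps)
    then have "norm (w i - w1 i) = norm (z i - y1 i) / t i"
      using \<open>t i > 0\<close> by simp
    also have "\<dots> \<le> \<kappa> * norm (y1 i - y2 i) / t i"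
      using z_close[OF \<open>near i\<close>] \<open>t i > 0\<close> by (simp add: divide_right_mono)
    also have "y1 i - y2 i = t i *\<^sub>R (w1 i - w2 i)"
      by (simp add: y1_def y2_def algebra_simps)
    then have "\<kappa> * norm (y1 i - y2 i) / t i = \<kappa> * norm (w1 i - w2 i)"
      using \<open>t i > 0\<close> by simp
    finally show "norm (w i - w1 i) \<le> \<kappa> * norm (w1 i - w2 i)" .
  qed
  then have "w \<longlonglongrightarrow> v"
    by (rule tendsto_of_eventually_norm_diff_le[OF w1_lim w2_lim])
  then show ?thesis
    using z_eq z_in by (intro exI[of _ w]) simp
qed

lemma linearly_regular_at_contingent_cone_Int:
  assumes "linearly_regular_at K1 K2 x" and "x \<in> K1 \<inter> K2"
    and "contingent_cone K1 x \<subseteq> adjacent_cone K1 x"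
  shows "contingent_cone (K1 \<inter> K2) x = contingent_cone K1 x \<inter> contingent_cone K2 x"
proof
  show "contingent_cone (K1 \<inter> K2) x \<subseteq> contingent_cone K1 x \<inter> contingent_cone K2 x"
    using contingent_cone_mono[of "K1 \<inter> K2"] by blast
  show "contingent_cone K1 x \<inter> contingent_cone K2 x \<subseteq> contingent_cone (K1 \<inter> K2) x"
  proof
    fix v
    assume v: "v \<in> contingent_cone K1 x \<inter> contingent_cone K2 x"
    then obtain t w2 where t_pos: "\<forall>i. t i > 0" and "t \<longlonglongrightarrow> 0" and w2: "w2 \<longlonglongrightarrow> v"
      "\<forall>i. x + t i *\<^sub>R w2 i \<in> K2"
      unfolding contingent_cone_def by blast
    \<comment> \<open>the adjacent cone lets K1 follow the sequence of times chosen by K2\<close>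
    have "v \<in> adjacent_cone K1 x"
      using v assms(3) by blast
    then obtain w1 where w1: "w1 \<longlonglongrightarrow> v" "\<forall>i. x + t i *\<^sub>R w1 i \<in> K1"
      using t_pos \<open>t \<longlonglongrightarrow> 0\<close> unfolding adjacent_cone_def by blast
    obtain w where "w \<longlonglongrightarrow> v" and "\<forall>i. x + t i *\<^sub>R w i \<in> K1 \<inter> K2"
      using linearly_regular_at_common_sequence[OF assms(1,2) t_pos \<open>t \<longlonglongrightarrow> 0\<close> w1(1) w2(1) w1(2) w2(2)]
      by blast
    then show "v \<in> contingent_cone (K1 \<inter> K2) x"
      using t_pos \<open>t \<longlonglongrightarrow> 0\<close> unfolding contingent_cone_def by blast
  qed
qed

lemma linearly_regular_at_adjacent_cone_Int:
  assumes "linearly_regular_at K1 K2 x" and "x \<in> K1 \<inter> K2"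
  shows "adjacent_cone (K1 \<inter> K2) x = adjacent_cone K1 x \<inter> adjacent_cone K2 x"
proof
  show "adjacent_cone (K1 \<inter> K2) x \<subseteq> adjacent_cone K1 x \<inter> adjacent_cone K2 x"
    using adjacent_cone_mono[of "K1 \<inter> K2"] by blast
  show "adjacent_cone K1 x \<inter> adjacent_cone K2 x \<subseteq> adjacent_cone (K1 \<inter> K2) x"
  proof
    fix v
    assume v: "v \<in> adjacent_cone K1 x \<inter> adjacent_cone K2 x"
    have "\<exists>w. w \<longlonglongrightarrow> v \<and> (\<forall>i. x + t i *\<^sub>R w i \<in> K1 \<inter> K2)"
      if t_pos: "\<forall>i. t i > 0" and t_lim: "t \<longlonglongrightarrow> 0" for t
    proof -
      obtain w1 where w1: "w1 \<longlonglongrightarrow> v" "\<forall>i. x + t i *\<^sub>R w1 i \<in> K1"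
        using v t_pos t_lim unfolding adjacent_cone_def by blast
      obtain w2 where w2: "w2 \<longlonglongrightarrow> v" "\<forall>i. x + t i *\<^sub>R w2 i \<in> K2"
        using v t_pos t_lim unfolding adjacent_cone_def by blast
      show ?thesis
        by (rule linearly_regular_at_common_sequence[OF assms t_pos t_lim w1(1) w2(1) w1(2) w2(2)])
    qed
    then show "v \<in> adjacent_cone (K1 \<inter> K2) x"
      unfolding adjacent_cone_def by blast
  qed
qed

theorem lemma1:
  fixes K1 K2 :: "(real ^ 'n) set" and xo :: "real ^ 'n"
  assumes "closed K1" and "closed K2"
    and "\<forall>x \<in> frontier K1 \<inter> frontier K2. contingent_cone K1 x = adjacent_cone K1 x"
    and "xo \<in> frontier K1 \<inter> frontier K2"
    and "open N" and "xo \<in> N" and "c > 0" and "0 \<le> \<alpha>" and "\<alpha> < 1"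
    and "\<forall>x1 \<in> (frontier K1 - K2) \<inter> N. \<forall>x2 \<in> (frontier K2 - K1) \<inter> N.
           \<exists>v1 \<in> contingent_cone K1 x1. \<exists>v2 \<in> contingent_cone K2 x2.
             norm (v1, v2) \<le> c * norm (x1 - x2) \<and>
             x2 - x1 \<in> (\<lambda>b. (v1 - v2) + b) ` ((\<lambda>b. (\<alpha> * norm (x1 - x2)) *\<^sub>R b) ` cball 0 1)"
  shows "contingent_cone K1 xo \<inter> contingent_cone K2 xo = contingent_cone (K1 \<inter> K2) xo
    \<and> adjacent_cone K1 xo \<inter> adjacent_cone K2 xo = adjacent_cone (K1 \<inter> K2) xo"
proof -
  have regular: "linearly_regular_at K1 K2 xo"
    using transversal_imp_linearly_regular_at assms(1,2,5-10) .
  have "xo \<in> K1 \<inter> K2"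
    using assms(1,2,4) frontier_subset_closed by blast
  moreover have "contingent_cone K1 xo \<subseteq> adjacent_cone K1 xo"
    using assms(3,4) by blast
  ultimately show ?thesis
    using linearly_regular_at_contingent_cone_Int[OF regular] linearly_regular_at_adjacent_cone_Int[OF regular]
    by blast
qed

end
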